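(* Let $n\ge 2$, $0<a\le\infty$, and let $\Psi(x)=\phi(|x|)$ be a rotationally symmetric convex function on the ball $B_a\subseteq\mathbb{R}^n$ of radius $a$ centered at the origin, with $f=\phi'(r)/r>0$ and $h=f+rf'>0$ on $[0,a)$ (so $\Psi$ has positive definite Hessian). With the functions $A,B,D$ of $r$ defined below, the Kähler Sasaki metric $(TB_a,\mathfrak{h}_\Psi)$ has non-negative orthogonal anti-bisectional curvature (NOAB) if and only if (1) when $n=2$: $A+B\ge0$ and $D\ge 0$ everywhere; (2) when $n\ge 3$: $A\ge 0$, $A+B\ge 0$ and $D\ge 0$ everywhere. Here, with $\dot f=\frac1r f'$, $\ddot f=\frac1r(\dot f)'$, $\dddot f=\frac1r(\ddot f)'$, $$A=-\frac{f}{h}\dot f,\qquad B=\frac{r^2}{h}\big(2\dot f^2-f\ddot f\big),$$ $$C=\Big(-4\frac fh+2+8\frac hf-6\frac{h^2}{f^2}\Big)\dot f+4\Big(\frac hf-\frac fh\Big)r^2\ddot f+\frac{r^6}{h}\ddot f^2-r^4\dddot f,$$ $$D=\Big(1+\frac hf\Big)^2A+2\Big(1+\frac hf\Big)B+C.$$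
   Context: Tube domain $T\Omega=\Omega\times\mathbb{R}^n\subseteq\mathbb{C}^n$ with coordinates $z=x+\sqrt{-1}y$; the Kähler Sasaki metric $\mathfrak{h}_\Psi$ has Kähler form $\sqrt{-1}\sum\Psi_{ij}(x)dz_i\wedge d\bar z_j$. For real vectors $u,v\in\mathbb{R}^n$ at a point $x$, the anti-bisectional curvature is $\mathfrak{A}(u,v)=\sum_{i,j,k,\ell}\big(-\Psi_{ijk\ell}+\sum_{p,q}\Psi_{ijp}\Psi_{k\ell q}\Psi^{pq}\big)u_iu_jv_kv_\ell$ (subscripts denote partial derivatives in $x$, $\Psi^{pq}$ the inverse of the Hessian). The metric has (NOAB) if $\mathfrak{A}(u,v)\ge0$ at every point for all $u,v\in\mathbb{R}^n$ with $\sum_{i,j}\Psi_{ij}u_iv_j=0$. *)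

theory Defs
  imports "HOL-Analysis.Analysis"
begin

definition partial :: "'n::finite \<Rightarrow> (real^'n \<Rightarrow> real) \<Rightarrow> real^'n \<Rightarrow> real" where
  "partial i g x = deriv (\<lambda>t. g (x + t *\<^sub>R axis i 1)) 0"

fun iter_partial :: "'n::finite list \<Rightarrow> (real^'n \<Rightarrow> real) \<Rightarrow> real^'n \<Rightarrow> real" where
  "iter_partial [] g = g"
| "iter_partial (i # is) g = partial i (iter_partial is g)"

definition smooth_on :: "(real^'n::finite) set \<Rightarrow> (real^'n \<Rightarrow> real) \<Rightarrow> bool" where
  "smooth_on S g \<longleftrightarrow> (\<forall>is. iter_partial is g differentiable_on S)"

definition eball0 :: "ereal \<Rightarrow> (real^'n::finite) set" where
  "eball0 a = {x. ereal (norm x) < a}"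

definition hess :: "(real^'n::finite \<Rightarrow> real) \<Rightarrow> real^'n \<Rightarrow> real^'n^'n" where
  "hess \<Psi> x = (\<chi> i j. partial i (partial j \<Psi>) x)"

definition anti_bisec :: "(real^'n::finite \<Rightarrow> real) \<Rightarrow> real^'n \<Rightarrow> real^'n \<Rightarrow> real^'n \<Rightarrow> real" where
  "anti_bisec \<Psi> x u v =
     (\<Sum>i\<in>UNIV. \<Sum>j\<in>UNIV. \<Sum>k\<in>UNIV. \<Sum>l\<in>UNIV.
        (- partial i (partial j (partial k (partial l \<Psi>))) x
         + (\<Sum>p\<in>UNIV. \<Sum>q\<in>UNIV.
              partial i (partial j (partial p \<Psi>)) x
            * partial k (partial l (partial q \<Psi>)) x
            * matrix_inv (hess \<Psi> x) $ p $ q))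
        * u $ i * u $ j * v $ k * v $ l)"

text \<open>(NOAB) for the metric on the tube domain over \<Omega>.\<close>
definition NOAB :: "(real^'n::finite \<Rightarrow> real) \<Rightarrow> (real^'n) set \<Rightarrow> bool" where
  "NOAB \<Psi> \<Omega> \<longleftrightarrow>
     (\<forall>x\<in>\<Omega>. \<forall>u v. (\<Sum>i\<in>UNIV. \<Sum>j\<in>UNIV. hess \<Psi> x $ i $ j * u $ i * v $ j) = 0
                   \<longrightarrow> anti_bisec \<Psi> x u v \<ge> 0)"

definition radf :: "(real \<Rightarrow> real) \<Rightarrow> real \<Rightarrow> real" where
  "radf \<phi> r = deriv \<phi> r / r"

definition radh :: "(real \<Rightarrow> real) \<Rightarrow> real \<Rightarrow> real" where
  "radh \<phi> r = radf \<phi> r + r * deriv (radf \<phi>) r"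

definition fdot :: "(real \<Rightarrow> real) \<Rightarrow> real \<Rightarrow> real" where
  "fdot \<phi> r = deriv (radf \<phi>) r / r"

definition fddot :: "(real \<Rightarrow> real) \<Rightarrow> real \<Rightarrow> real" where
  "fddot \<phi> r = deriv (fdot \<phi>) r / r"

definition fdddot :: "(real \<Rightarrow> real) \<Rightarrow> real \<Rightarrow> real" where
  "fdddot \<phi> r = deriv (fddot \<phi>) r / r"

definition coefA :: "(real \<Rightarrow> real) \<Rightarrow> real \<Rightarrow> real" where
  "coefA \<phi> r = - (radf \<phi> r / radh \<phi> r) * fdot \<phi> r"

definition coefB :: "(real \<Rightarrow> real) \<Rightarrow> real \<Rightarrow> real" where
  "coefB \<phi> r = r^2 / radh \<phi> r * (2 * (fdot \<phi> r)^2 - radf \<phi> r * fddot \<phi> r)"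

definition coefC :: "(real \<Rightarrow> real) \<Rightarrow> real \<Rightarrow> real" where
  "coefC \<phi> r =
     (let f = radf \<phi> r; h = radh \<phi> r in
       (-4 * (f / h) + 2 + 8 * (h / f) - 6 * (h^2 / f^2)) * fdot \<phi> r
       + 4 * (h / f - f / h) * r^2 * fddot \<phi> r
       + r^6 / h * (fddot \<phi> r)^2 - r^4 * fdddot \<phi> r)"

definition coefD :: "(real \<Rightarrow> real) \<Rightarrow> real \<Rightarrow> real" where
  "coefD \<phi> r =
     (let q = 1 + radh \<phi> r / radf \<phi> r in
       q^2 * coefA \<phi> r + 2 * q * coefB \<phi> r + coefC \<phi> r)"

end

(*
  Away from the origin the potential \<Psi>(x) = \<phi>(|x|) has Hessian f I + fdot x x^T, whose inverse
  is explicit, and its third and fourth derivatives are polynomials in x with coefficients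
  fdot, fddot, fdddot.  Write S = (u.x)^2/|x|^2, p = |u|^2 - S for the squared lengths of the
  components of u along and across x, and T, q likewise for v.  For Hessian-orthogonal u, v the
  anti-bisectional curvature is the quadratic form (A + 2B + C) S T + (A + B) (S q + T p) + A p q,
  while orthogonality gives (h/f)^2 S T = (u'.v')^2 <= p q for the transversal components u', v',
  with equality when n = 2.  By AM-GM the form is then nonnegative as soon as A + B >= 0 and
  D = (A + 2B + C) + 2 (A + B) h/f + A (h/f)^2 >= 0 (and A >= 0 if n >= 3); suitable test vectors
  at the points r e show that these conditions are necessary.  At the origin all third derivatives
  vanish, the curvature is -fdot(0) (|u|^2 |v|^2 + 2 (u.v)^2), and A + B tends to -fdot(0).
*)

theory Submission
  imports Defs
begin

lemma partial_eqI:
  assumes "((\<lambda>t. g (x + t *\<^sub>R axis i 1)) has_real_derivative D) (at 0)"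
  shows "partial i g x = D"
  using assms by (simp add: partial_def DERIV_imp_deriv)

lemma partial_cong_open:
  fixes g g' :: "real^'n::finite \<Rightarrow> real"
  assumes "open S" "x \<in> S" "\<And>y. y \<in> S \<Longrightarrow> g y = g' y"
  shows "partial i g x = partial i g' x"
proof -
  have "open ((\<lambda>t. x + t *\<^sub>R axis i (1::real)) -` S)"
    by (rule continuous_open_vimage[OF assms(1)]) (intro continuous_intros)
  moreover have "0 \<in> (\<lambda>t. x + t *\<^sub>R axis i (1::real)) -` S"
    using assms(2) by simp
  ultimately have "\<forall>\<^sub>F t in nhds 0. t \<in> (\<lambda>t. x + t *\<^sub>R axis i (1::real)) -` S"
    by (rule eventually_nhds_in_open)
  then have "\<forall>\<^sub>F t in nhds 0. g (x + t *\<^sub>R axis i 1) = g' (x + t *\<^sub>R axis i 1)"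
    by (rule eventually_mono) (use assms(3) in auto)
  then show ?thesis
    unfolding partial_def by (rule deriv_cong_ev) simp
qed

lemma has_derivative_along_line:
  fixes g :: "'a::real_normed_vector \<Rightarrow> real"
  assumes "(g has_derivative g') (at (y + s *\<^sub>R e))"
  shows "((\<lambda>t. g (y + t *\<^sub>R e)) has_real_derivative g' e) (at s)"
proof -
  have "((\<lambda>t. y + t *\<^sub>R e) has_derivative (\<lambda>t. t *\<^sub>R e)) (at s)"
    by (auto intro!: derivative_eq_intros)
  from has_derivative_compose[OF this assms]
  have "((\<lambda>t. g (y + t *\<^sub>R e)) has_derivative (\<lambda>t. g' (t *\<^sub>R e))) (at s)" .
  moreover have "(\<lambda>t. g' (t *\<^sub>R e)) = (*) (g' e)"
    using linear_scale[OF has_derivative_linear[OF assms]] by (auto simp: mult.commute)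
  ultimately show ?thesis
    unfolding has_field_derivative_def by simp
qed

lemma partial_has_derivative:
  fixes g :: "real^'n::finite \<Rightarrow> real"
  assumes "(g has_derivative g') (at x)"
  shows "partial i g x = g' (axis i 1)"
  using assms by (intro partial_eqI has_derivative_along_line) simp

lemma norm_along_line_deriv:
  fixes x :: "real^'n::finite"
  assumes "x \<noteq> 0"
  shows "((\<lambda>t. norm (x + t *\<^sub>R axis i 1)) has_real_derivative x $ i / norm x) (at 0)"
proof -
  have "(norm has_derivative (\<lambda>h. sgn x \<bullet> h)) (at (x + 0 *\<^sub>R axis i 1))"
    using has_derivative_norm[OF assms] by (simp add: inner_commute)
  from has_derivative_along_line[OF this] show ?thesis
    by (simp add: sgn_div_norm inner_axis divide_inverse mult.commute)
qed

lemma radial_along_line_deriv: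
  fixes x :: "real^'n::finite"
  assumes "x \<noteq> 0" and "(g has_real_derivative norm x * g1) (at (norm x))"
    and "D = g1 * x $ i"
  shows "((\<lambda>t. g (norm (x + t *\<^sub>R axis i 1))) has_real_derivative D) (at 0)"
proof -
  have "(g has_real_derivative norm x * g1) (at (norm (x + 0 *\<^sub>R axis i 1)))"
    using assms(2) by simp
  from DERIV_chain2[OF this norm_along_line_deriv[OF assms(1)]] show ?thesis
    using assms(1,3) by simp
qed

lemma open_eball0: "open (eball0 a)"
  unfolding eball0_def by (intro open_Collect_less continuous_intros)

lemma has_real_derivative_dotted:
  "(g has_real_derivative D) (at r) \<Longrightarrow> r \<noteq> 0 \<Longrightarrow> (g has_real_derivative r * (deriv g r / r)) (at r)"
  by (simp add: DERIV_imp_deriv)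

section \<open>Radial tensors\<close>

definition kron :: "'a \<Rightarrow> 'a \<Rightarrow> real" where
  "kron i j = (if i = j then 1 else 0)"

lemma kron_sym: "kron i j = kron j i"
  by (simp add: kron_def)

lemma axis_nth_kron: "axis i (1::real) $ j = kron i j"
  by (simp add: axis_def kron_def)

lemma component_along_line_deriv:
  "D = kron i j \<Longrightarrow> ((\<lambda>t. (x + t *\<^sub>R axis i 1) $ j) has_real_derivative D) (at 0)"
  by (auto intro!: derivative_eq_intros simp: kron_def axis_def)

lemma kron_mult: "kron i j * y = (if i = j then y else 0)"
  and mult_kron: "y * kron i j = (if i = j then y else 0)"
  by (simp_all add: kron_def)

lemma mult_if_zero: "(c::real) * (if P then y else 0) = (if P then c * y else 0)"
  and if_zero_mult: "(if P then y else 0) * (c::real) = (if P then y * c else 0)"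
  and sum_if_zero: "(\<Sum>j\<in>A. if P then f j else 0) = (if P then (\<Sum>j\<in>A. f j) else (0::real))"
  by simp_all

lemmas kron_contract_simps = sum_distrib_left sum_distrib_right sum.distrib kron_mult mult_kron
  mult_if_zero if_zero_mult sum_if_zero algebra_simps inner_vec_def

text \<open>At \<open>x \<noteq> 0\<close>, with \<open>r = |x|\<close>, the second, third and fourth derivatives of \<open>\<phi> (norm x)\<close> are
  \<open>radial2 (radf \<phi> r) (fdot \<phi> r) x\<close>, \<open>radial3 (fdot \<phi> r) (fddot \<phi> r) x\<close> and
  \<open>radial4 (fdot \<phi> r) (fddot \<phi> r) (fdddot \<phi> r) x\<close>.\<close>

definition radial2 :: "real \<Rightarrow> real \<Rightarrow> real^'n::finite \<Rightarrow> 'n \<Rightarrow> 'n \<Rightarrow> real" where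
  "radial2 a b x i j = a * kron i j + b * x$i * x$j"

definition radial3 :: "real \<Rightarrow> real \<Rightarrow> real^'n::finite \<Rightarrow> 'n \<Rightarrow> 'n \<Rightarrow> 'n \<Rightarrow> real" where
  "radial3 b c x i j k = b * (kron i j * x$k + kron i k * x$j + kron j k * x$i) + c * x$i * x$j * x$k"

definition radial4 :: "real \<Rightarrow> real \<Rightarrow> real \<Rightarrow> real^'n::finite \<Rightarrow> 'n \<Rightarrow> 'n \<Rightarrow> 'n \<Rightarrow> 'n \<Rightarrow> real" where
  "radial4 b c d x i j k l =
     b * (kron i j * kron k l + kron i k * kron j l + kron i l * kron j k)
   + c * (kron i j * x$k * x$l + kron i k * x$j * x$l + kron i l * x$j * x$k
        + kron j k * x$i * x$l + kron j l * x$i * x$k + kron k l * x$i * x$j)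
   + d * x$i * x$j * x$k * x$l"

lemma radial2_bilinear:
  fixes x u v :: "real^'n::finite"
  shows "(\<Sum>i\<in>UNIV. \<Sum>j\<in>UNIV. radial2 a b x i j * u$i * v$j) = a * (u \<bullet> v) + b * (u \<bullet> x) * (v \<bullet> x)"
proof -
  have "(\<Sum>i\<in>UNIV. \<Sum>j\<in>UNIV. radial2 a b x i j * u$i * v$j)
      = (\<Sum>i\<in>UNIV. u$i * (\<Sum>j\<in>UNIV. radial2 a b x i j * v$j))"
    by (simp add: sum_distrib_left mult_ac)
  also have "\<dots> = (\<Sum>i\<in>UNIV. u$i * (a * v$i + b * x$i * (v \<bullet> x)))"
    by (rule sum.cong[OF refl]) (simp add: radial2_def kron_contract_simps)
  finally show ?thesis
    by (simp add: kron_contract_simps)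
qed

definition radial3_vec :: "real \<Rightarrow> real \<Rightarrow> real^'n::finite \<Rightarrow> real^'n \<Rightarrow> real^'n" where
  "radial3_vec b c x u = (b * (u \<bullet> u) + c * (u \<bullet> x)^2) *\<^sub>R x + (2 * b * (u \<bullet> x)) *\<^sub>R u"

lemma radial3_contract:
  fixes x u :: "real^'n::finite"
  shows "(\<Sum>i\<in>UNIV. \<Sum>j\<in>UNIV. radial3 b c x i j p * u$i * u$j) = radial3_vec b c x u $ p"
proof -
  have "(\<Sum>i\<in>UNIV. \<Sum>j\<in>UNIV. radial3 b c x i j p * u$i * u$j)
      = (\<Sum>i\<in>UNIV. u$i * (\<Sum>j\<in>UNIV. radial3 b c x i j p * u$j))"
    by (simp add: sum_distrib_left mult_ac)
  also have "\<dots> = (\<Sum>i\<in>UNIV. u$i * (b * (u$i * x$p + kron i p * (u \<bullet> x) + u$p * x$i)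
                                        + c * x$i * x$p * (u \<bullet> x)))"
    by (rule sum.cong[OF refl]) (simp add: radial3_def kron_contract_simps)
  finally show ?thesis
    by (simp add: radial3_vec_def kron_contract_simps power2_eq_square)
qed

lemma radial4_quartic:
  fixes x u v :: "real^'n::finite"
  shows "(\<Sum>i\<in>UNIV. \<Sum>j\<in>UNIV. \<Sum>k\<in>UNIV. \<Sum>l\<in>UNIV. radial4 b c d x i j k l * u$i * u$j * v$k * v$l)
   = b * ((u \<bullet> u) * (v \<bullet> v) + 2 * (u \<bullet> v)^2)
   + c * ((u \<bullet> u) * (v \<bullet> x)^2 + 4 * (u \<bullet> x) * (v \<bullet> x) * (u \<bullet> v) + (v \<bullet> v) * (u \<bullet> x)^2)
   + d * (u \<bullet> x)^2 * (v \<bullet> x)^2"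
proof -
  have l: "(\<Sum>l\<in>UNIV. radial4 b c d x i j k l * v$l) =
      b * (kron i j * v$k + kron i k * v$j + kron j k * v$i)
    + c * (kron i j * x$k * (v \<bullet> x) + kron i k * x$j * (v \<bullet> x) + v$i * x$j * x$k
         + kron j k * x$i * (v \<bullet> x) + v$j * x$i * x$k + v$k * x$i * x$j)
    + d * x$i * x$j * x$k * (v \<bullet> x)" for i j k
    unfolding radial4_def by (simp add: kron_contract_simps)
  have k: "(\<Sum>k\<in>UNIV. v$k * (b * (kron i j * v$k + kron i k * v$j + kron j k * v$i)
    + c * (kron i j * x$k * \<beta> + kron i k * x$j * \<beta> + v$i * x$j * x$k + kron j k * x$i * \<beta>
         + v$j * x$i * x$k + v$k * x$i * x$j)
    + d * x$i * x$j * x$k * \<beta>)) =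
      b * (kron i j * (v \<bullet> v) + 2 * v$i * v$j)
    + c * (kron i j * \<beta> * (v \<bullet> x) + v$i * x$j * (\<beta> + v \<bullet> x) + x$i * v$j * (\<beta> + v \<bullet> x)
         + (v \<bullet> v) * x$i * x$j)
    + d * x$i * x$j * \<beta> * (v \<bullet> x)" for i j \<beta>
    by (simp add: kron_contract_simps)
  have j: "(\<Sum>j\<in>UNIV. u$j * (b * (kron i j * \<gamma> + 2 * v$i * v$j)
    + c * (kron i j * \<beta> * \<beta>' + v$i * x$j * (\<beta> + \<beta>') + x$i * v$j * (\<beta> + \<beta>') + \<gamma> * x$i * x$j)
    + d * x$i * x$j * \<beta> * \<beta>')) =
      b * (u$i * \<gamma> + 2 * v$i * (u \<bullet> v))
    + c * (u$i * \<beta> * \<beta>' + v$i * (u \<bullet> x) * (\<beta> + \<beta>') + x$i * (u \<bullet> v) * (\<beta> + \<beta>')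
         + \<gamma> * x$i * (u \<bullet> x))
    + d * x$i * (u \<bullet> x) * \<beta> * \<beta>'" for i \<beta> \<beta>' \<gamma>
    by (simp add: kron_contract_simps)
  have i: "(\<Sum>i\<in>UNIV. u$i * (b * (u$i * \<gamma> + 2 * v$i * \<mu>)
    + c * (u$i * \<beta> * \<beta>' + v$i * \<alpha> * (\<beta> + \<beta>') + x$i * \<mu> * (\<beta> + \<beta>') + \<gamma> * x$i * \<alpha>)
    + d * x$i * \<alpha> * \<beta> * \<beta>')) =
      b * ((u \<bullet> u) * \<gamma> + 2 * (u \<bullet> v) * \<mu>)
    + c * ((u \<bullet> u) * \<beta> * \<beta>' + (u \<bullet> v) * \<alpha> * (\<beta> + \<beta>') + (u \<bullet> x) * \<mu> * (\<beta> + \<beta>')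
         + \<gamma> * (u \<bullet> x) * \<alpha>)
    + d * (u \<bullet> x) * \<alpha> * \<beta> * \<beta>'" for \<alpha> \<beta> \<beta>' \<gamma> \<mu>
    by (simp add: kron_contract_simps)
  have "(\<Sum>i\<in>UNIV. \<Sum>j\<in>UNIV. \<Sum>k\<in>UNIV. \<Sum>l\<in>UNIV. radial4 b c d x i j k l * u$i * u$j * v$k * v$l)
      = (\<Sum>i\<in>UNIV. u$i * (\<Sum>j\<in>UNIV. u$j * (\<Sum>k\<in>UNIV. v$k * (\<Sum>l\<in>UNIV. radial4 b c d x i j k l * v$l))))"
    by (simp add: sum_distrib_left mult_ac)
  then show ?thesis
    unfolding l k j i by (simp add: algebra_simps power2_eq_square)
qed

lemma sum_swap_outer:
  "(\<Sum>l\<in>A. \<Sum>p\<in>B. \<Sum>q\<in>C. f l p q) = (\<Sum>p\<in>B. \<Sum>q\<in>C. \<Sum>l\<in>A. f l p q)"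
  by (subst sum.swap) (simp only: sum.swap[of _ A])

lemma sum4_sum2_swap:
  "(\<Sum>i\<in>A. \<Sum>j\<in>A. \<Sum>k\<in>A. \<Sum>l\<in>A. \<Sum>p\<in>B. \<Sum>q\<in>B. f i j k l p q)
 = (\<Sum>p\<in>B. \<Sum>q\<in>B. \<Sum>i\<in>A. \<Sum>j\<in>A. \<Sum>k\<in>A. \<Sum>l\<in>A. f i j k l p q)"
proof -
  have "(\<Sum>i\<in>A. \<Sum>j\<in>A. \<Sum>k\<in>A. \<Sum>l\<in>A. \<Sum>p\<in>B. \<Sum>q\<in>B. f i j k l p q)
      = (\<Sum>i\<in>A. \<Sum>j\<in>A. \<Sum>k\<in>A. \<Sum>p\<in>B. \<Sum>q\<in>B. \<Sum>l\<in>A. f i j k l p q)"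
    by (intro sum.cong refl sum_swap_outer)
  also have "\<dots> = (\<Sum>i\<in>A. \<Sum>j\<in>A. \<Sum>p\<in>B. \<Sum>q\<in>B. \<Sum>k\<in>A. \<Sum>l\<in>A. f i j k l p q)"
    by (intro sum.cong refl sum_swap_outer)
  also have "\<dots> = (\<Sum>i\<in>A. \<Sum>p\<in>B. \<Sum>q\<in>B. \<Sum>j\<in>A. \<Sum>k\<in>A. \<Sum>l\<in>A. f i j k l p q)"
    by (intro sum.cong refl sum_swap_outer)
  also have "\<dots> = (\<Sum>p\<in>B. \<Sum>q\<in>B. \<Sum>i\<in>A. \<Sum>j\<in>A. \<Sum>k\<in>A. \<Sum>l\<in>A. f i j k l p q)"
    by (rule sum_swap_outer)
  finally show ?thesis .
qed

lemma anti_bisec_split: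
  fixes \<Psi> :: "real^'n::finite \<Rightarrow> real"
  shows "anti_bisec \<Psi> x u v =
    - (\<Sum>i\<in>UNIV. \<Sum>j\<in>UNIV. \<Sum>k\<in>UNIV. \<Sum>l\<in>UNIV.
         partial i (partial j (partial k (partial l \<Psi>))) x * u$i * u$j * v$k * v$l)
    + (\<Sum>p\<in>UNIV. \<Sum>q\<in>UNIV. matrix_inv (hess \<Psi> x) $ p $ q
         * (\<Sum>i\<in>UNIV. \<Sum>j\<in>UNIV. partial i (partial j (partial p \<Psi>)) x * u$i * u$j)
         * (\<Sum>k\<in>UNIV. \<Sum>l\<in>UNIV. partial k (partial l (partial q \<Psi>)) x * v$k * v$l))"
    (is "_ = - ?E + ?T")
proof -
  let ?A = "\<lambda>i j p. partial i (partial j (partial p \<Psi>)) x"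
  let ?M = "\<lambda>p q. matrix_inv (hess \<Psi> x) $ p $ q"
  let ?t = "\<lambda>i j k l p q. ?M p q * (?A i j p * u$i * u$j) * (?A k l q * v$k * v$l)"
  have "(\<Sum>i\<in>UNIV. \<Sum>j\<in>UNIV. \<Sum>k\<in>UNIV. \<Sum>l\<in>UNIV. ?t i j k l p q)
      = ?M p q * (\<Sum>i\<in>UNIV. \<Sum>j\<in>UNIV. ?A i j p * u$i * u$j) * (\<Sum>k\<in>UNIV. \<Sum>l\<in>UNIV. ?A k l q * v$k * v$l)" for p q
    by (simp only: sum_distrib_left[symmetric] sum_distrib_right[symmetric])
  then have "?T = (\<Sum>p\<in>UNIV. \<Sum>q\<in>UNIV. \<Sum>i\<in>UNIV. \<Sum>j\<in>UNIV. \<Sum>k\<in>UNIV. \<Sum>l\<in>UNIV. ?t i j k l p q)"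
    by simp
  also have "\<dots> = (\<Sum>i\<in>UNIV. \<Sum>j\<in>UNIV. \<Sum>k\<in>UNIV. \<Sum>l\<in>UNIV. \<Sum>p\<in>UNIV. \<Sum>q\<in>UNIV. ?t i j k l p q)"
    by (rule sum4_sum2_swap[symmetric])
  finally have T: "?T = \<dots>" .
  have "(- partial i (partial j (partial k (partial l \<Psi>))) x
          + (\<Sum>p\<in>UNIV. \<Sum>q\<in>UNIV. ?A i j p * ?A k l q * ?M p q)) * u$i * u$j * v$k * v$l
      = - (partial i (partial j (partial k (partial l \<Psi>))) x * u$i * u$j * v$k * v$l)
        + (\<Sum>p\<in>UNIV. \<Sum>q\<in>UNIV. ?t i j k l p q)" for i j k l
    by (simp add: sum_distrib_left algebra_simps)
  then show ?thesis
    unfolding anti_bisec_def T by (simp only: sum.distrib sum_negf)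
qed

lemma matrix_inv_unique:
  fixes A B :: "'a::semiring_1^'n^'n"
  assumes "A ** B = mat 1" "B ** A = mat 1"
  shows "matrix_inv A = B"
proof -
  let ?C = "matrix_inv A"
  have C: "A ** ?C = mat 1 \<and> ?C ** A = mat 1"
    unfolding matrix_inv_def by (rule someI[of _ B]) (use assms in auto)
  have "?C = ?C ** (A ** B)"
    using assms by simp
  also have "\<dots> = (?C ** A) ** B"
    by (simp add: matrix_mul_assoc)
  also have "\<dots> = B"
    using C by simp
  finally show ?thesis .
qed

lemma matrix_inv_radial2:
  fixes x :: "real^'n::finite"
  assumes "a \<noteq> 0" "a + (x \<bullet> x) * b \<noteq> 0"
  shows "matrix_inv (\<chi> i j. radial2 a b x i j)
       = (\<chi> i j. radial2 (inverse a) (- (b / (a * (a + (x \<bullet> x) * b)))) x i j)"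
proof (rule matrix_inv_unique)
  define c where "c = b / (a * (a + (x \<bullet> x) * b))"
  have "c * (a + (x \<bullet> x) * b) = b / a"
    using assms(2) by (simp add: c_def)
  then have key: "b / a - c * a - c * b * (x \<bullet> x) = 0"
    by (simp add: algebra_simps)
  have "(\<Sum>k\<in>UNIV. radial2 a b x i k * radial2 (inverse a) (- c) x k j)
      = kron i j + x$i * x$j * (b / a - c * a - c * b * (x \<bullet> x))" for i j
    unfolding radial2_def using assms(1)
    by (simp add: kron_contract_simps sum_subtractf) (simp add: field_simps kron_def)
  then show "(\<chi> i j. radial2 a b x i j) ** (\<chi> i j. radial2 (inverse a) (- c) x i j) = mat 1"
    using key by (simp add: matrix_matrix_mult_def mat_def vec_eq_iff kron_def)
  have "(\<Sum>k\<in>UNIV. radial2 (inverse a) (- c) x i k * radial2 a b x k j)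
      = kron i j + x$i * x$j * (b / a - c * a - c * b * (x \<bullet> x))" for i j
    unfolding radial2_def using assms(1)
    by (simp add: kron_contract_simps sum_subtractf) (simp add: field_simps kron_def)
  then show "(\<chi> i j. radial2 (inverse a) (- c) x i j) ** (\<chi> i j. radial2 a b x i j) = mat 1"
    using key by (simp add: matrix_matrix_mult_def mat_def vec_eq_iff kron_def)
qed

lemma radial_curvature_identity:
  fixes f fd fdd fddd h r a b c U V :: real
  assumes "f > 0" "r > 0" "h = f + r^2 * fd" "h > 0" and orth: "f * c + fd * a * b = 0"
  defines "Pu \<equiv> fd * U + fdd * a^2" and "Pv \<equiv> fd * V + fdd * b^2"
  defines "A \<equiv> - (f / h) * fd" and "B \<equiv> r^2 / h * (2 * fd^2 - f * fdd)"
  defines "C \<equiv> (-4 * (f / h) + 2 + 8 * (h / f) - 6 * (h^2 / f^2)) * fd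
                + 4 * (h / f - f / h) * r^2 * fdd + r^6 / h * fdd^2 - r^4 * fddd"
  shows "- (fd * (U * V + 2 * c^2) + fdd * (U * b^2 + 4 * a * b * c + V * a^2) + fddd * a^2 * b^2)
     + (Pu * Pv * r^2 + 2 * fd * b^2 * Pu + 2 * fd * a^2 * Pv + 4 * fd^2 * a * b * c) * inverse f
     - fd / (f * h) * (Pu * r^2 + 2 * fd * a^2) * (Pv * r^2 + 2 * fd * b^2)
   = (A + 2 * B + C) * (a^2 / r^2) * (b^2 / r^2)
     + (A + B) * ((a^2 / r^2) * (V - b^2 / r^2) + (b^2 / r^2) * (U - a^2 / r^2))
     + A * (U - a^2 / r^2) * (V - b^2 / r^2)"
proof -
  have c: "c = - fd * a * b / f"
    using orth \<open>f > 0\<close> by (simp add: field_simps)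
  show ?thesis
    unfolding c Pu_def Pv_def A_def B_def C_def
    using assms(1,2,4) by (simp add: field_simps) (simp only: assms(3), algebra)
qed

lemma coefD_eq:
  "coefD \<phi> r = (coefA \<phi> r + 2 * coefB \<phi> r + coefC \<phi> r)
     + 2 * (coefA \<phi> r + coefB \<phi> r) * (radh \<phi> r / radf \<phi> r) + coefA \<phi> r * (radh \<phi> r / radf \<phi> r)^2"
  unfolding coefD_def Let_def by (simp add: algebra_simps power2_eq_square)

text \<open>AM-GM gives \<open>S q + T p \<ge> 2 m N\<close> for \<open>m = sqrt (S T)\<close>, \<open>N = sqrt (p q)\<close>, and \<open>N \<ge> t m\<close>; the form is
  then at least \<open>\<alpha> m\<^sup>2 + 2 \<beta> m N + \<gamma> N\<^sup>2 \<ge> m\<^sup>2 (\<alpha> + 2 \<beta> t + \<gamma> t\<^sup>2)\<close>.\<close>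

lemma quadratic_form_nonneg:
  fixes \<alpha> \<beta> \<gamma> t S T p q :: real
  assumes "\<beta> \<ge> 0" "t \<ge> 0" and D: "\<alpha> + 2 * \<beta> * t + \<gamma> * t^2 \<ge> 0"
    and "S \<ge> 0" "T \<ge> 0" "p \<ge> 0" "q \<ge> 0"
    and cases: "t^2 * (S * T) = p * q \<or> (\<gamma> \<ge> 0 \<and> t^2 * (S * T) \<le> p * q)"
  shows "\<alpha> * S * T + \<beta> * (S * q + T * p) + \<gamma> * p * q \<ge> 0"
proof -
  define m N where "m = sqrt (S * T)" and "N = sqrt (p * q)"
  have "m \<ge> 0" "N \<ge> 0" "S * T = m^2" "p * q = N^2"
    using assms(4-7) by (simp_all add: m_def N_def)
  have "sqrt (S * q * (T * p)) \<le> (S * q + T * p) / 2"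
    using assms(4-7) by (intro arith_geo_mean_sqrt) simp_all
  then have "2 * m * N \<le> S * q + T * p"
    by (simp add: m_def N_def real_sqrt_mult[symmetric] mult_ac)
  then have "\<beta> * (2 * m * N) \<le> \<beta> * (S * q + T * p)"
    using \<open>\<beta> \<ge> 0\<close> by (rule mult_left_mono)
  then have "\<alpha> * S * T + \<beta> * (S * q + T * p) + \<gamma> * p * q \<ge> \<alpha> * m^2 + 2 * \<beta> * m * N + \<gamma> * N^2"
    by (simp add: mult.assoc \<open>S * T = m^2\<close> \<open>p * q = N^2\<close>)
  moreover have "\<alpha> * m^2 + 2 * \<beta> * m * N + \<gamma> * N^2 \<ge> m^2 * (\<alpha> + 2 * \<beta> * t + \<gamma> * t^2)"
  proof -
    have tm: "(t * m)^2 = t^2 * (S * T)"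
      by (simp add: \<open>S * T = m^2\<close> power_mult_distrib)
    show ?thesis
      using cases
    proof
      assume "t^2 * (S * T) = p * q"
      then have "N = t * m"
        using \<open>t \<ge> 0\<close> \<open>m \<ge> 0\<close> \<open>N \<ge> 0\<close> \<open>p * q = N^2\<close> tm
        by simp
      then show ?thesis
        by (simp add: algebra_simps power2_eq_square)
    next
      assume "\<gamma> \<ge> 0 \<and> t^2 * (S * T) \<le> p * q"
      then have "\<gamma> \<ge> 0" "t * m \<le> N"
        using \<open>N \<ge> 0\<close> \<open>p * q = N^2\<close> tm by (auto intro: power2_le_imp_le)
      then have "2 * \<beta> * m * (t * m) + \<gamma> * (t * m)^2 \<le> 2 * \<beta> * m * N + \<gamma> * N^2"
        using \<open>\<beta> \<ge> 0\<close> \<open>t \<ge> 0\<close> \<open>m \<ge> 0\<close>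
        by (intro add_mono mult_left_mono power_mono) simp_all
      then show ?thesis
        by (simp add: algebra_simps power2_eq_square)
    qed
  qed
  moreover have "m^2 * (\<alpha> + 2 * \<beta> * t + \<gamma> * t^2) \<ge> 0"
    using D by simp
  ultimately show ?thesis
    by linarith
qed

lemma inner_orthogonal_projections:
  fixes u v x :: "'a::real_inner"
  assumes "x \<noteq> 0"
  shows "(u - ((u \<bullet> x) / (x \<bullet> x)) *\<^sub>R x) \<bullet> (v - ((v \<bullet> x) / (x \<bullet> x)) *\<^sub>R x)
       = u \<bullet> v - (u \<bullet> x) * (v \<bullet> x) / (x \<bullet> x)"
  using assms by (simp add: inner_diff_left inner_diff_right inner_commute[of x v] field_simps power2_eq_square)

lemma inner_eq_norms_if_orthogonal_dim2:
  fixes x y z :: "real^'n::finite"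
  assumes "CARD('n) = 2" "x \<noteq> 0" "y \<bullet> x = 0" "z \<bullet> x = 0"
  shows "(y \<bullet> z)^2 = (y \<bullet> y) * (z \<bullet> z)"
proof -
  obtain i j :: 'n where ij: "i \<noteq> j" "UNIV = {i, j}"
    using assms(1) card_2_iff[of "UNIV :: 'n set"] by blast
  have ip: "w \<bullet> w' = w$i * w'$i + w$j * w'$j" for w w' :: "real^'n"
    unfolding inner_vec_def ij(2) using ij(1) by simp
  have "x$i \<noteq> 0 \<or> x$j \<noteq> 0"
    using assms(2) ij(2) by (auto simp: vec_eq_iff)
  moreover have "(y$i * z$j - y$j * z$i) * x$k
      = (if k = i then z$j else - z$i) * (y \<bullet> x) - (if k = i then y$j else - y$i) * (z \<bullet> x)"
    if "k \<in> {i, j}" for k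
    using that ij(1) by (auto simp: ip algebra_simps)
  ultimately have "y$i * z$j - y$j * z$i = 0"
    using assms(3,4) by force
  moreover have "(y \<bullet> y) * (z \<bullet> z) - (y \<bullet> z)^2 = (y$i * z$j - y$j * z$i)^2"
    by (simp add: ip power2_eq_square algebra_simps)
  ultimately show ?thesis
    by simp
qed

lemma card_UNIV_Diff_singleton: "card (UNIV - {i :: 'n::finite}) = CARD('n) - 1"
  by (simp add: card_Diff_singleton)

lemma exists_other_index:
  assumes "CARD('n::finite) \<ge> 2"
  shows "\<exists>j::'n. j \<noteq> i"
proof -
  have "card (UNIV - {i}) \<noteq> 0"
    using assms by (simp add: card_UNIV_Diff_singleton)
  then have "UNIV - {i} \<noteq> {}"
    by (metis card.empty)
  then show ?thesis
    by blast
qed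

lemma exists_two_other_indices:
  assumes "CARD('n::finite) \<ge> 2" "CARD('n) \<noteq> 2"
  shows "\<exists>j k::'n. j \<noteq> i \<and> k \<noteq> i \<and> j \<noteq> k"
proof -
  have "\<not> card (UNIV - {i}) \<le> Suc 0"
    using assms by (simp add: card_UNIV_Diff_singleton)
  then show ?thesis
    by (subst (asm) card_le_Suc0_iff_eq) auto
qed

locale radial_potential =
  fixes \<Psi> :: "real^'n::finite \<Rightarrow> real" and \<phi> :: "real \<Rightarrow> real" and a :: ereal
  assumes dim_ge_2: "CARD('n) \<ge> 2" and radius_pos: "0 < a"
    and smooth: "smooth_on (eball0 a) \<Psi>"
    and radial: "\<forall>x\<in>eball0 a. \<Psi> x = \<phi> (norm x)"
    and radf_radh_pos: "\<forall>r. 0 < r \<and> ereal r < a \<longrightarrow> radf \<phi> r > 0 \<and> radh \<phi> r > 0"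
begin

text \<open>\<open>F\<close>, \<open>F1\<close>, \<open>F2\<close>, \<open>F3\<close> and \<open>H\<close> are the functions f, fdot, fddot, fdddot and h of the statement.\<close>

abbreviation "F \<equiv> radf \<phi>"
abbreviation "F1 \<equiv> fdot \<phi>"
abbreviation "F2 \<equiv> fddot \<phi>"
abbreviation "F3 \<equiv> fdddot \<phi>"
abbreviation "H \<equiv> radh \<phi>"

definition radii :: "real set" where
  "radii = {r. 0 < r \<and> ereal r < a}"

lemma open_radii: "open radii"
  unfolding radii_def by (intro open_Collect_conj open_Collect_less continuous_intros)

lemma radii_pos: "r \<in> radii \<Longrightarrow> r > 0"
  by (simp add: radii_def)

lemma radf_radh_pos_radii: "r \<in> radii \<Longrightarrow> F r > 0 \<and> H r > 0"
  using radf_radh_pos by (simp add: radii_def)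

lemma radh_eq: "r \<in> radii \<Longrightarrow> H r = F r + r^2 * F1 r"
  using radii_pos[of r] by (simp add: radh_def fdot_def power2_eq_square)

lemma iter_partial_differentiable: "x \<in> eball0 a \<Longrightarrow> iter_partial is \<Psi> differentiable (at x)"
  using smooth open_eball0 unfolding smooth_on_def
  by (meson differentiable_on_eq_differentiable_at)

definition i0 :: 'n where "i0 = (SOME i. True)"

abbreviation "e0 \<equiv> axis i0 (1::real)"

text \<open>Smoothness of \<open>\<Psi>\<close> reaches \<open>\<phi>\<close> and the radial functions through the derivatives of \<open>\<Psi>\<close>
  along the ray through \<open>e0\<close>.\<close>

definition ray_partial :: "nat \<Rightarrow> real \<Rightarrow> real" where
  "ray_partial k r = iter_partial (replicate k i0) \<Psi> (r *\<^sub>R e0)"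

lemma ray_in_eball0: "r \<in> radii \<Longrightarrow> r *\<^sub>R axis i (1::real) \<in> eball0 a"
  by (auto simp: radii_def eball0_def)

lemma ray_partial_has_derivative:
  assumes "r \<in> radii"
  shows "(ray_partial k has_real_derivative ray_partial (Suc k) r) (at r)"
proof -
  obtain g' where g': "(iter_partial (replicate k i0) \<Psi> has_derivative g') (at (0 + r *\<^sub>R e0))"
    using iter_partial_differentiable[OF ray_in_eball0[OF assms]] by (auto simp: differentiable_def)
  then have "ray_partial (Suc k) r = g' e0"
    by (simp add: ray_partial_def partial_has_derivative)
  with has_derivative_along_line[OF g'] show ?thesis
    by (simp add: ray_partial_def[abs_def])
qed

lemma phi_has_derivative_ray:
  assumes r: "r \<in> radii"
  shows "(\<phi> has_real_derivative ray_partial 1 r) (at r)"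
proof -
  have "(ray_partial 0 has_real_derivative ray_partial 1 r) (at r)"
    using ray_partial_has_derivative[OF r, of 0] by simp
  then show ?thesis
    by (rule has_field_derivative_transform_within_open[OF _ open_radii r])
       (use radial ray_in_eball0 radii_pos in \<open>fastforce simp: ray_partial_def\<close>)
qed

lemma radf_ray: "r \<in> radii \<Longrightarrow> F r = ray_partial 1 r / r"
  by (simp add: radf_def DERIV_imp_deriv[OF phi_has_derivative_ray])

lemma radf_has_derivative_ray:
  assumes r: "r \<in> radii"
  shows "(F has_real_derivative ray_partial 2 r / r - ray_partial 1 r / r^2) (at r)"
proof -
  have "((\<lambda>s. ray_partial 1 s / s) has_real_derivative ray_partial 2 r / r - ray_partial 1 r / r^2) (at r)"
    using radii_pos[OF r] ray_partial_has_derivative[OF r, of 1]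
    by (auto intro!: derivative_eq_intros simp: field_simps power2_eq_square numeral_2_eq_2)
  then show ?thesis
    by (rule has_field_derivative_transform_within_open[OF _ open_radii r]) (simp add: radf_ray)
qed

lemma fdot_ray: "r \<in> radii \<Longrightarrow> F1 r = ray_partial 2 r / r^2 - ray_partial 1 r / r^3"
  using radii_pos[of r]
  by (simp add: fdot_def DERIV_imp_deriv[OF radf_has_derivative_ray] field_simps power2_eq_square power3_eq_cube)

lemma fdot_has_derivative_ray:
  assumes r: "r \<in> radii"
  shows "(F1 has_real_derivative
           ray_partial 3 r / r^2 - 3 * ray_partial 2 r / r^3 + 3 * ray_partial 1 r / r^4) (at r)"
proof -
  have "((\<lambda>s. ray_partial 2 s / s^2 - ray_partial 1 s / s^3) has_real_derivative
           ray_partial 3 r / r^2 - 3 * ray_partial 2 r / r^3 + 3 * ray_partial 1 r / r^4) (at r)"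
    using radii_pos[OF r] ray_partial_has_derivative[OF r, of 1] ray_partial_has_derivative[OF r, of 2]
    by (auto intro!: derivative_eq_intros simp: field_simps eval_nat_numeral)
  then show ?thesis
    by (rule has_field_derivative_transform_within_open[OF _ open_radii r]) (simp add: fdot_ray)
qed

lemma fddot_ray:
  "r \<in> radii \<Longrightarrow> F2 r = ray_partial 3 r / r^3 - 3 * ray_partial 2 r / r^4 + 3 * ray_partial 1 r / r^5"
  using radii_pos[of r]
  by (simp add: fddot_def DERIV_imp_deriv[OF fdot_has_derivative_ray] field_simps eval_nat_numeral)

lemma fddot_has_derivative_ray:
  assumes r: "r \<in> radii"
  shows "(F2 has_real_derivative ray_partial 4 r / r^3 - 6 * ray_partial 3 r / r^4
           + 15 * ray_partial 2 r / r^5 - 15 * ray_partial 1 r / r^6) (at r)"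
proof -
  have "((\<lambda>s. ray_partial 3 s / s^3 - 3 * ray_partial 2 s / s^4 + 3 * ray_partial 1 s / s^5)
          has_real_derivative ray_partial 4 r / r^3 - 6 * ray_partial 3 r / r^4
           + 15 * ray_partial 2 r / r^5 - 15 * ray_partial 1 r / r^6) (at r)"
    using radii_pos[OF r] ray_partial_has_derivative[OF r, of 1] ray_partial_has_derivative[OF r, of 2]
      ray_partial_has_derivative[OF r, of 3]
    by (auto intro!: derivative_eq_intros simp: field_simps eval_nat_numeral)
  then show ?thesis
    by (rule has_field_derivative_transform_within_open[OF _ open_radii r]) (simp add: fddot_ray)
qed

lemma radial_has_derivatives:
  assumes r: "r \<in> radii"
  shows "(\<phi> has_real_derivative r * F r) (at r)" and "(F has_real_derivative r * F1 r) (at r)"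
    and "(F1 has_real_derivative r * F2 r) (at r)" and "(F2 has_real_derivative r * F3 r) (at r)"
  using has_real_derivative_dotted[OF phi_has_derivative_ray[OF r]]
    has_real_derivative_dotted[OF radf_has_derivative_ray[OF r]]
    has_real_derivative_dotted[OF fdot_has_derivative_ray[OF r]]
    has_real_derivative_dotted[OF fddot_has_derivative_ray[OF r]] radii_pos[OF r]
  by (simp_all add: radf_def fdot_def fddot_def fdddot_def)

definition punctured_ball :: "(real^'n) set" where
  "punctured_ball = eball0 a - {0}"

lemma open_punctured_ball: "open punctured_ball"
  unfolding punctured_ball_def by (intro open_Diff open_eball0 closed_singleton)

lemma norm_in_radii: "x \<in> punctured_ball \<Longrightarrow> norm x \<in> radii"
  by (auto simp: punctured_ball_def radii_def eball0_def)

lemma punctured_ball_nonzero: "x \<in> punctured_ball \<Longrightarrow> x \<noteq> 0"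
  by (simp add: punctured_ball_def)

lemma partial_radial1:
  assumes x: "x \<in> punctured_ball"
  shows "partial l \<Psi> x = F (norm x) * x$l"
proof -
  have "partial l \<Psi> x = partial l (\<lambda>y. \<phi> (norm y)) x"
    by (rule partial_cong_open[OF open_eball0]) (use x radial in \<open>auto simp: punctured_ball_def\<close>)
  also have "\<dots> = F (norm x) * x$l"
    using radial_has_derivatives(1)[OF norm_in_radii[OF x]] punctured_ball_nonzero[OF x]
    by (intro partial_eqI radial_along_line_deriv) auto
  finally show ?thesis .
qed

lemma partial_radial2:
  assumes x: "x \<in> punctured_ball"
  shows "partial k (partial l \<Psi>) x = radial2 (F (norm x)) (F1 (norm x)) x k l"
proof -
  have "partial k (partial l \<Psi>) x = partial k (\<lambda>y. F (norm y) * y$l) x"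
    by (rule partial_cong_open[OF open_punctured_ball x]) (use partial_radial1 in auto)
  also have "\<dots> = radial2 (F (norm x)) (F1 (norm x)) x k l"
    using radial_has_derivatives(2)[OF norm_in_radii[OF x]] punctured_ball_nonzero[OF x]
    by (intro partial_eqI)
       (auto intro!: derivative_eq_intros radial_along_line_deriv component_along_line_deriv
             simp: radial2_def algebra_simps axis_nth_kron)
  finally show ?thesis .
qed

lemma partial_radial3:
  assumes x: "x \<in> punctured_ball"
  shows "partial j (partial k (partial l \<Psi>)) x = radial3 (F1 (norm x)) (F2 (norm x)) x j k l"
proof -
  have "partial j (partial k (partial l \<Psi>)) x = partial j (\<lambda>y. radial2 (F (norm y)) (F1 (norm y)) y k l) x"
    by (rule partial_cong_open[OF open_punctured_ball x]) (use partial_radial2 in auto)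
  also have "\<dots> = radial3 (F1 (norm x)) (F2 (norm x)) x j k l"
    using radial_has_derivatives(2,3)[OF norm_in_radii[OF x]] punctured_ball_nonzero[OF x]
    by (intro partial_eqI)
       (auto intro!: derivative_eq_intros radial_along_line_deriv component_along_line_deriv
             simp: radial2_def radial3_def algebra_simps kron_sym axis_nth_kron)
  finally show ?thesis .
qed

lemma partial_radial4:
  assumes x: "x \<in> punctured_ball"
  shows "partial i (partial j (partial k (partial l \<Psi>))) x
       = radial4 (F1 (norm x)) (F2 (norm x)) (F3 (norm x)) x i j k l"
proof -
  have "partial i (partial j (partial k (partial l \<Psi>))) x
      = partial i (\<lambda>y. radial3 (F1 (norm y)) (F2 (norm y)) y j k l) x"
    by (rule partial_cong_open[OF open_punctured_ball x]) (use partial_radial3 in auto)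
  also have "\<dots> = radial4 (F1 (norm x)) (F2 (norm x)) (F3 (norm x)) x i j k l"
    using radial_has_derivatives(3,4)[OF norm_in_radii[OF x]] punctured_ball_nonzero[OF x]
    by (intro partial_eqI)
       (auto intro!: derivative_eq_intros radial_along_line_deriv component_along_line_deriv
             simp: radial3_def radial4_def algebra_simps kron_sym axis_nth_kron)
  finally show ?thesis .
qed

lemma hess_punctured:
  "x \<in> punctured_ball \<Longrightarrow> hess \<Psi> x = (\<chi> i j. radial2 (F (norm x)) (F1 (norm x)) x i j)"
  by (simp add: hess_def partial_radial2 vec_eq_iff)

lemma hess_form_punctured:
  "x \<in> punctured_ball \<Longrightarrow> (\<Sum>i\<in>UNIV. \<Sum>j\<in>UNIV. hess \<Psi> x $ i $ j * u $ i * v $ j)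
     = F (norm x) * (u \<bullet> v) + F1 (norm x) * (u \<bullet> x) * (v \<bullet> x)"
  by (simp add: hess_punctured radial2_bilinear)

lemma anti_bisec_punctured:
  fixes u v :: "real^'n"
  assumes x: "x \<in> punctured_ball"
  defines "r \<equiv> norm x"
  defines "Pu \<equiv> F1 r * (u \<bullet> u) + F2 r * (u \<bullet> x)^2" and "Pv \<equiv> F1 r * (v \<bullet> v) + F2 r * (v \<bullet> x)^2"
  shows "anti_bisec \<Psi> x u v =
     - (F1 r * ((u \<bullet> u) * (v \<bullet> v) + 2 * (u \<bullet> v)^2)
        + F2 r * ((u \<bullet> u) * (v \<bullet> x)^2 + 4 * (u \<bullet> x) * (v \<bullet> x) * (u \<bullet> v) + (v \<bullet> v) * (u \<bullet> x)^2)
        + F3 r * (u \<bullet> x)^2 * (v \<bullet> x)^2)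
     + (Pu * Pv * r^2 + 2 * F1 r * (v \<bullet> x)^2 * Pu + 2 * F1 r * (u \<bullet> x)^2 * Pv
        + 4 * (F1 r)^2 * (u \<bullet> x) * (v \<bullet> x) * (u \<bullet> v)) * inverse (F r)
     - F1 r / (F r * H r) * (Pu * r^2 + 2 * F1 r * (u \<bullet> x)^2) * (Pv * r^2 + 2 * F1 r * (v \<bullet> x)^2)"
proof -
  have r: "r \<in> radii" and xx: "x \<bullet> x = r^2"
    using norm_in_radii[OF x] by (simp_all add: r_def power2_norm_eq_inner)
  have h: "F r + (x \<bullet> x) * F1 r = H r" and "F r > 0" "H r > 0"
    using radh_eq[OF r] radf_radh_pos_radii[OF r] xx by (simp_all add: algebra_simps)
  then have inv: "matrix_inv (hess \<Psi> x) = (\<chi> i j. radial2 (inverse (F r)) (- (F1 r / (F r * H r))) x i j)"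
    using matrix_inv_radial2[of "F r" x "F1 r"] by (simp add: hess_punctured[OF x] r_def)
  let ?\<alpha> = "radial3_vec (F1 r) (F2 r) x u" and ?\<beta> = "radial3_vec (F1 r) (F2 r) x v"
  have "anti_bisec \<Psi> x u v =
      - (F1 r * ((u \<bullet> u) * (v \<bullet> v) + 2 * (u \<bullet> v)^2)
         + F2 r * ((u \<bullet> u) * (v \<bullet> x)^2 + 4 * (u \<bullet> x) * (v \<bullet> x) * (u \<bullet> v) + (v \<bullet> v) * (u \<bullet> x)^2)
         + F3 r * (u \<bullet> x)^2 * (v \<bullet> x)^2)
      + (inverse (F r) * (?\<alpha> \<bullet> ?\<beta>) - F1 r / (F r * H r) * (?\<alpha> \<bullet> x) * (?\<beta> \<bullet> x))"
    unfolding anti_bisec_split inv partial_radial4[OF x] partial_radial3[OF x] radial3_contract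
      vec_lambda_beta radial4_quartic radial2_bilinear
    by (simp add: r_def)
  moreover have "?\<alpha> \<bullet> ?\<beta> = Pu * Pv * r^2 + 2 * F1 r * (v \<bullet> x)^2 * Pu + 2 * F1 r * (u \<bullet> x)^2 * Pv
                               + 4 * (F1 r)^2 * (u \<bullet> x) * (v \<bullet> x) * (u \<bullet> v)"
    unfolding radial3_vec_def Pu_def[symmetric] Pv_def[symmetric]
    by (simp add: xx inner_commute[of x u] inner_commute[of x v] inner_commute[of v u]
        algebra_simps power2_eq_square)
  moreover have "?\<alpha> \<bullet> x = Pu * r^2 + 2 * F1 r * (u \<bullet> x)^2" "?\<beta> \<bullet> x = Pv * r^2 + 2 * F1 r * (v \<bullet> x)^2"
    unfolding radial3_vec_def Pu_def[symmetric] Pv_def[symmetric]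
    by (simp_all add: xx algebra_simps power2_eq_square)
  ultimately show ?thesis
    by (simp add: algebra_simps)
qed

subsection \<open>Sufficiency away from the origin\<close>

lemma anti_bisec_quadratic_form:
  fixes u v :: "real^'n"
  assumes x: "x \<in> punctured_ball"
    and orth: "F (norm x) * (u \<bullet> v) + F1 (norm x) * (u \<bullet> x) * (v \<bullet> x) = 0"
  defines "S \<equiv> (u \<bullet> x)^2 / (norm x)^2" and "T \<equiv> (v \<bullet> x)^2 / (norm x)^2"
  defines "A \<equiv> coefA \<phi> (norm x)" and "B \<equiv> coefB \<phi> (norm x)" and "C \<equiv> coefC \<phi> (norm x)"
  shows "anti_bisec \<Psi> x u v
       = (A + 2 * B + C) * S * T + (A + B) * (S * (v \<bullet> v - T) + T * (u \<bullet> u - S))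
         + A * (u \<bullet> u - S) * (v \<bullet> v - T)"
proof -
  have r: "norm x \<in> radii"
    by (rule norm_in_radii[OF x])
  have "F (norm x) > 0" "H (norm x) > 0"
    using radf_radh_pos_radii[OF r] by simp_all
  note identity = radial_curvature_identity[where f = "F (norm x)" and fd = "F1 (norm x)"
      and fdd = "F2 (norm x)" and fddd = "F3 (norm x)" and h = "H (norm x)" and r = "norm x"
      and a = "u \<bullet> x" and b = "v \<bullet> x" and c = "u \<bullet> v" and U = "u \<bullet> u" and V = "v \<bullet> v"]
  show ?thesis
    unfolding anti_bisec_punctured[OF x]
      identity[OF \<open>F (norm x) > 0\<close> radii_pos[OF r] radh_eq[OF r] \<open>H (norm x) > 0\<close> orth]
    by (simp add: A_def B_def C_def S_def T_def coefA_def coefB_def coefC_def Let_def)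
qed

text \<open>For the components \<open>u'\<close>, \<open>v'\<close> of \<open>u\<close>, \<open>v\<close> orthogonal to \<open>x\<close>, Hessian orthogonality gives
  \<open>(u' \<bullet> v')\<^sup>2 = t\<^sup>2 S T\<close>; then Cauchy-Schwarz, which is an equality in the plane.\<close>

lemma hess_orthogonal_components:
  fixes u v :: "real^'n"
  assumes x: "x \<in> punctured_ball"
    and orth: "F (norm x) * (u \<bullet> v) + F1 (norm x) * (u \<bullet> x) * (v \<bullet> x) = 0"
  defines "S \<equiv> (u \<bullet> x)^2 / (norm x)^2" and "T \<equiv> (v \<bullet> x)^2 / (norm x)^2"
  defines "t \<equiv> H (norm x) / F (norm x)"
  shows "t^2 * (S * T) \<le> (u \<bullet> u - S) * (v \<bullet> v - T)"
    and "CARD('n) = 2 \<Longrightarrow> t^2 * (S * T) = (u \<bullet> u - S) * (v \<bullet> v - T)"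
proof -
  have r: "norm x \<in> radii" and "x \<noteq> 0"
    using norm_in_radii[OF x] punctured_ball_nonzero[OF x] .
  have xx: "x \<bullet> x = (norm x)^2"
    by (simp add: power2_norm_eq_inner)
  define u' v' where "u' = u - ((u \<bullet> x) / (x \<bullet> x)) *\<^sub>R x" and "v' = v - ((v \<bullet> x) / (x \<bullet> x)) *\<^sub>R x"
  have "u' \<bullet> v' = u \<bullet> v - (u \<bullet> x) * (v \<bullet> x) / (x \<bullet> x)" "u' \<bullet> u' = u \<bullet> u - S" "v' \<bullet> v' = v \<bullet> v - T"
    unfolding u'_def v'_def S_def T_def xx[symmetric] using \<open>x \<noteq> 0\<close>
    by (simp_all add: inner_orthogonal_projections power2_eq_square)
  moreover have "u' \<bullet> x = 0" "v' \<bullet> x = 0"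
    using \<open>x \<noteq> 0\<close> by (simp_all add: u'_def v'_def inner_diff_left)
  moreover have "t^2 * (S * T) = (u \<bullet> v - (u \<bullet> x) * (v \<bullet> x) / (x \<bullet> x))^2"
  proof -
    have uv: "u \<bullet> v = - F1 (norm x) * (u \<bullet> x) * (v \<bullet> x) / F (norm x)"
      using orth radf_radh_pos_radii[OF r] by (simp add: field_simps)
    show ?thesis
      using radf_radh_pos_radii[OF r] radii_pos[OF r]
      by (simp add: uv t_def S_def T_def xx radh_eq[OF r] field_simps power2_eq_square)
  qed
  ultimately show "t^2 * (S * T) \<le> (u \<bullet> u - S) * (v \<bullet> v - T)"
    and "CARD('n) = 2 \<Longrightarrow> t^2 * (S * T) = (u \<bullet> u - S) * (v \<bullet> v - T)"
    using Cauchy_Schwarz_ineq[of u' v'] inner_eq_norms_if_orthogonal_dim2[OF _ \<open>x \<noteq> 0\<close>, of u' v']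
    by simp_all
qed

lemma anti_bisec_nonneg_punctured:
  fixes u v :: "real^'n"
  assumes x: "x \<in> punctured_ball"
    and orth: "(\<Sum>i\<in>UNIV. \<Sum>j\<in>UNIV. hess \<Psi> x $ i $ j * u $ i * v $ j) = 0"
    and AB: "coefA \<phi> (norm x) + coefB \<phi> (norm x) \<ge> 0" and D: "coefD \<phi> (norm x) \<ge> 0"
    and A: "CARD('n) = 2 \<or> coefA \<phi> (norm x) \<ge> 0"
  shows "anti_bisec \<Psi> x u v \<ge> 0"
proof -
  have r: "norm x \<in> radii"
    by (rule norm_in_radii[OF x])
  have orth': "F (norm x) * (u \<bullet> v) + F1 (norm x) * (u \<bullet> x) * (v \<bullet> x) = 0"
    using orth hess_form_punctured[OF x] by simp
  have "0 \<le> (u \<bullet> x)^2 / (norm x)^2" "0 \<le> (v \<bullet> x)^2 / (norm x)^2"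
    and "(u \<bullet> x)^2 / (norm x)^2 \<le> u \<bullet> u" "(v \<bullet> x)^2 / (norm x)^2 \<le> v \<bullet> v"
    using Cauchy_Schwarz_ineq[of _ x] punctured_ball_nonzero[OF x]
    by (simp_all add: divide_le_eq power2_norm_eq_inner)
  moreover have "H (norm x) / F (norm x) \<ge> 0"
    using radf_radh_pos_radii[OF r] by simp
  ultimately show ?thesis
    unfolding anti_bisec_quadratic_form[OF x orth']
    using hess_orthogonal_components[OF x orth'] AB A D coefD_eq[of \<phi> "norm x"]
    by (intro quadratic_form_nonneg) auto
qed

subsection \<open>Necessity\<close>

lemma NOAB_on_ray:
  fixes u v :: "real^'n"
  assumes N: "NOAB \<Psi> (eball0 a)" and r: "r \<in> radii"
    and orth: "F r * (u \<bullet> v) + r^2 * F1 r * u$i0 * v$i0 = 0"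
  defines "A \<equiv> coefA \<phi> r" and "B \<equiv> coefB \<phi> r" and "C \<equiv> coefC \<phi> r"
  shows "0 \<le> (A + 2 * B + C) * (u$i0)^2 * (v$i0)^2
    + (A + B) * ((u$i0)^2 * (v \<bullet> v - (v$i0)^2) + (v$i0)^2 * (u \<bullet> u - (u$i0)^2))
    + A * (u \<bullet> u - (u$i0)^2) * (v \<bullet> v - (v$i0)^2)"
proof -
  let ?x = "r *\<^sub>R e0"
  have x: "?x \<in> punctured_ball" and nx: "norm ?x = r"
    using ray_in_eball0[OF r] radii_pos[OF r] by (simp_all add: punctured_ball_def)
  have ux: "w \<bullet> ?x = r * w$i0" for w :: "real^'n"
    by (simp add: inner_axis)
  have orth': "F (norm ?x) * (u \<bullet> v) + F1 (norm ?x) * (u \<bullet> ?x) * (v \<bullet> ?x) = 0"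
    using orth unfolding nx ux by (simp add: algebra_simps power2_eq_square)
  have "anti_bisec \<Psi> ?x u v \<ge> 0"
    using N x orth' hess_form_punctured[OF x] unfolding NOAB_def punctured_ball_def by auto
  then show ?thesis
    unfolding anti_bisec_quadratic_form[OF x orth'] nx ux
    using radii_pos[OF r] by (simp add: A_def B_def C_def power_mult_distrib)
qed

lemma NOAB_imp_coefAB_nonneg:
  assumes N: "NOAB \<Psi> (eball0 a)" and r: "r \<in> radii"
  shows "coefA \<phi> r + coefB \<phi> r \<ge> 0"
proof -
  obtain j where "j \<noteq> i0"
    using exists_other_index[OF dim_ge_2] by blast
  then show ?thesis
    using NOAB_on_ray[OF N r, of "axis j 1" e0] by (simp add: inner_axis_axis axis_nth_kron kron_def)
qed

lemma NOAB_imp_coefA_nonneg: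
  assumes N: "NOAB \<Psi> (eball0 a)" and r: "r \<in> radii" and "CARD('n) \<noteq> 2"
  shows "coefA \<phi> r \<ge> 0"
proof -
  obtain j k where "j \<noteq> i0" "k \<noteq> i0" "j \<noteq> k"
    using exists_two_other_indices[OF dim_ge_2 \<open>CARD('n) \<noteq> 2\<close>] by blast
  then show ?thesis
    using NOAB_on_ray[OF N r, of "axis j 1" "axis k 1"] by (simp add: inner_axis_axis axis_nth_kron kron_def)
qed

lemma NOAB_imp_coefD_nonneg:
  assumes N: "NOAB \<Psi> (eball0 a)" and r: "r \<in> radii"
  shows "coefD \<phi> r \<ge> 0"
proof -
  obtain j where j: "j \<noteq> i0"
    using exists_other_index[OF dim_ge_2] by blast
  have "F r > 0" "H r > 0"
    using radf_radh_pos_radii[OF r] by simp_all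
  txt \<open>This choice of \<open>s\<close> makes \<open>s e0 \<plusminus> e\<^sub>j\<close> Hessian orthogonal, and the form becomes \<open>s\<^sup>4 D\<close>.\<close>
  define s where "s = sqrt (F r / H r)"
  have "s > 0" and s2: "s^2 = F r / H r"
    using \<open>F r > 0\<close> \<open>H r > 0\<close> by (simp_all add: s_def)
  let ?u = "s *\<^sub>R e0 + axis j 1" and ?v = "s *\<^sub>R e0 - axis j 1"
  have inner: "?u \<bullet> ?v = s^2 - 1" "?u \<bullet> ?u = s^2 + 1" "?v \<bullet> ?v = s^2 + 1" "?u$i0 = s" "?v$i0 = s"
    using j by (simp_all add: inner_add_left inner_add_right inner_diff_left inner_diff_right
        inner_axis_axis axis_nth_kron kron_def power2_eq_square)
  have "F r * (?u \<bullet> ?v) + r^2 * F1 r * ?u$i0 * ?v$i0 = s^2 * H r - F r"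
    unfolding inner radh_eq[OF r] by (simp add: algebra_simps power2_eq_square)
  then have "0 \<le> (coefA \<phi> r + 2 * coefB \<phi> r + coefC \<phi> r) * s^2 * s^2
      + (coefA \<phi> r + coefB \<phi> r) * (s^2 + s^2) + coefA \<phi> r"
    using NOAB_on_ray[OF N r, of ?u ?v] \<open>H r > 0\<close> unfolding inner by (simp add: s2)
  also have "\<dots> = s^2 * s^2 * coefD \<phi> r"
    unfolding coefD_eq[of \<phi> r] s2 using \<open>F r > 0\<close> \<open>H r > 0\<close>
    by (simp add: field_simps power2_eq_square)
  finally show ?thesis
    using \<open>s > 0\<close> by (simp add: zero_le_mult_iff)
qed

subsection \<open>The origin\<close>

lemma zero_in_eball0: "0 \<in> eball0 a"
  using radius_pos by (simp add: eball0_def zero_ereal_def)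

lemma eventually_in_radii: "\<forall>\<^sub>F t in at_right 0. t \<in> radii"
proof -
  obtain b where "0 < b" "ereal b < a"
    using ereal_dense2[of "ereal 0" a] radius_pos by (auto simp: zero_ereal_def)
  show ?thesis
    using eventually_at_right_real[OF \<open>0 < b\<close>]
    by (rule eventually_mono)
       (use \<open>ereal b < a\<close> in \<open>auto simp: radii_def intro: order.strict_trans[of _ "ereal b"]\<close>)
qed

lemma partial_radial_on_axis:
  assumes t: "t \<in> radii"
  shows "partial k (partial l \<Psi>) (t *\<^sub>R axis i 1) = radial2 (F t) (F1 t) (t *\<^sub>R axis i 1) k l"
    and "partial j (partial k (partial l \<Psi>)) (t *\<^sub>R axis i 1) = radial3 (F1 t) (F2 t) (t *\<^sub>R axis i 1) j k l"
    and "partial m (partial j (partial k (partial l \<Psi>))) (t *\<^sub>R axis i 1)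
       = radial4 (F1 t) (F2 t) (F3 t) (t *\<^sub>R axis i 1) m j k l"
proof -
  have "t *\<^sub>R axis i 1 \<in> punctured_ball" and n: "norm (t *\<^sub>R axis i (1::real)) = t"
    using ray_in_eball0[OF t, of i] radii_pos[OF t] by (simp_all add: punctured_ball_def)
  from partial_radial2[OF this(1)] partial_radial3[OF this(1)] partial_radial4[OF this(1)]
  show "partial k (partial l \<Psi>) (t *\<^sub>R axis i 1) = radial2 (F t) (F1 t) (t *\<^sub>R axis i 1) k l"
    and "partial j (partial k (partial l \<Psi>)) (t *\<^sub>R axis i 1) = radial3 (F1 t) (F2 t) (t *\<^sub>R axis i 1) j k l"
    and "partial m (partial j (partial k (partial l \<Psi>))) (t *\<^sub>R axis i 1)
       = radial4 (F1 t) (F2 t) (F3 t) (t *\<^sub>R axis i 1) m j k l"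
    unfolding n by blast+
qed

lemma iter_partial_tendsto_along_axis:
  assumes "\<And>t. t \<in> radii \<Longrightarrow> iter_partial is \<Psi> (t *\<^sub>R axis i 1) = g t"
  shows "(g \<longlongrightarrow> iter_partial is \<Psi> 0) (at_right 0)"
proof -
  have "isCont (iter_partial is \<Psi>) 0"
    using differentiable_imp_continuous_within[OF iter_partial_differentiable[OF zero_in_eball0]]
    by (simp add: continuous_at)
  moreover have "((\<lambda>t. t *\<^sub>R axis i (1::real)) \<longlongrightarrow> 0) (at_right 0)"
    by (auto intro!: tendsto_eq_intros)
  ultimately have "((\<lambda>t. iter_partial is \<Psi> (t *\<^sub>R axis i 1)) \<longlongrightarrow> iter_partial is \<Psi> 0) (at_right 0)"
    by (rule isCont_tendsto_compose)
  then show ?thesis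
    by (rule tendsto_cong[THEN iffD1, rotated]) (use eventually_in_radii assms in \<open>auto elim: eventually_mono\<close>)
qed

lemma partial_at_0_tendsto_along_axis:
  assumes "\<And>t. t \<in> radii \<Longrightarrow> (iter_partial is \<Psi> (t *\<^sub>R axis i 1) - iter_partial is \<Psi> 0) / t = g t"
  shows "(g \<longlongrightarrow> partial i (iter_partial is \<Psi>) 0) (at_right 0)"
proof -
  obtain g' where g': "(iter_partial is \<Psi> has_derivative g') (at (0 + 0 *\<^sub>R axis i 1))"
    using iter_partial_differentiable[OF zero_in_eball0] by (auto simp: differentiable_def)
  then have "((\<lambda>t. iter_partial is \<Psi> (t *\<^sub>R axis i 1)) has_real_derivative partial i (iter_partial is \<Psi>) 0) (at 0)"
    using has_derivative_along_line[OF g'] partial_has_derivative[of _ g' 0] by simp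
  then have "((\<lambda>t. (iter_partial is \<Psi> (t *\<^sub>R axis i 1) - iter_partial is \<Psi> 0) / t)
               \<longlongrightarrow> partial i (iter_partial is \<Psi>) 0) (at_right 0)"
    by (auto simp: has_field_derivative_iff intro: tendsto_mono[OF at_within_le_at])
  then show ?thesis
    by (rule tendsto_cong[THEN iffD1, rotated]) (use eventually_in_radii assms in \<open>auto elim: eventually_mono\<close>)
qed

definition j0 :: 'n where "j0 = (SOME j. j \<noteq> i0)"

lemma j0_neq_i0: "j0 \<noteq> i0"
  unfolding j0_def using exists_other_index[OF dim_ge_2, of i0] by (rule someI_ex)

text \<open>\<open>fdot \<phi>\<close> extends continuously to the origin: along the ray through \<open>e0\<close>, the fourth
  derivative of \<open>\<Psi>\<close> in a transversal direction \<open>j0\<close> is \<open>3 fdot \<phi>\<close>.\<close>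

definition fdot0 :: real where
  "fdot0 = partial j0 (partial j0 (partial j0 (partial j0 \<Psi>))) 0 / 3"

lemma fdot_tendsto: "(F1 \<longlongrightarrow> fdot0) (at_right 0)"
proof -
  have "((\<lambda>t. 3 * F1 t) \<longlongrightarrow> iter_partial [j0, j0, j0, j0] \<Psi> 0) (at_right 0)"
    using partial_radial_on_axis(3) j0_neq_i0
    by (intro iter_partial_tendsto_along_axis[of _ i0])
       (simp add: radial4_def axis_nth_kron kron_def)
  then have "((\<lambda>t. 3 * F1 t / 3) \<longlongrightarrow> iter_partial [j0, j0, j0, j0] \<Psi> 0 / 3) (at_right 0)"
    by (intro tendsto_divide) auto
  then show ?thesis
    by (simp add: fdot0_def)
qed

lemma fddot_scaled_tendsto: "((\<lambda>t. t^2 * F2 t) \<longlongrightarrow> 0) (at_right 0)"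
proof -
  have "((\<lambda>t. t * F1 t) \<longlongrightarrow> iter_partial [i0, j0, j0] \<Psi> 0) (at_right 0)"
    using partial_radial_on_axis(2) j0_neq_i0
    by (intro iter_partial_tendsto_along_axis[of _ i0]) (simp add: radial3_def axis_nth_kron kron_def)
  moreover have "((\<lambda>t. t * F1 t) \<longlongrightarrow> 0 * fdot0) (at_right 0)"
    by (intro tendsto_intros fdot_tendsto)
  ultimately have third: "iter_partial [i0, j0, j0] \<Psi> 0 = 0"
    using tendsto_unique[OF trivial_limit_at_right_real] by simp
  have "(F1 \<longlongrightarrow> partial i0 (iter_partial [i0, j0, j0] \<Psi>) 0) (at_right 0)"
    using partial_radial_on_axis(2) j0_neq_i0 radii_pos third
    by (intro partial_at_0_tendsto_along_axis) (fastforce simp: radial3_def axis_nth_kron kron_def)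
  then have fourth: "iter_partial [i0, i0, j0, j0] \<Psi> 0 = fdot0"
    using tendsto_unique[OF trivial_limit_at_right_real] fdot_tendsto by simp
  have "((\<lambda>t. F1 t + t^2 * F2 t) \<longlongrightarrow> fdot0) (at_right 0)"
    unfolding fourth[symmetric] using partial_radial_on_axis(3) j0_neq_i0
    by (intro iter_partial_tendsto_along_axis[of _ i0])
       (simp add: radial4_def axis_nth_kron kron_def power2_eq_square)
  then have "((\<lambda>t. (F1 t + t^2 * F2 t) - F1 t) \<longlongrightarrow> fdot0 - fdot0) (at_right 0)"
    by (intro tendsto_intros fdot_tendsto)
  then show ?thesis
    by simp
qed

lemma hess_at_0:
  assumes "(F \<longlongrightarrow> f0) (at_right 0)"
  shows "hess \<Psi> 0 = (\<chi> i j. radial2 f0 0 0 i j)"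
proof -
  have lim: "((\<lambda>t. F t * kron i j + t^2 * F1 t * kron i0 i * kron i0 j) \<longlongrightarrow> iter_partial [i, j] \<Psi> 0) (at_right 0)"
    for i j
    using partial_radial_on_axis(1)
    by (intro iter_partial_tendsto_along_axis[of _ i0]) (simp add: radial2_def axis_nth_kron power2_eq_square)
  have "((\<lambda>t. F t * kron i j + t^2 * F1 t * kron i0 i * kron i0 j) \<longlongrightarrow> f0 * kron i j) (at_right 0)"
    for i j
    by (auto intro!: tendsto_eq_intros assms fdot_tendsto)
  then have "partial i (partial j \<Psi>) 0 = f0 * kron i j" for i j
    using tendsto_unique[OF trivial_limit_at_right_real lim] by simp
  then show ?thesis
    by (simp add: hess_def radial2_def vec_eq_iff)
qed

lemma third_partials_at_0: "partial i (partial j (partial k \<Psi>)) 0 = 0"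
proof -
  let ?c1 = "kron i j * kron i0 k + kron i k * kron i0 j + kron j k * kron i0 i"
  let ?c2 = "kron i0 i * kron i0 j * kron i0 k"
  have "((\<lambda>t. t * F1 t * ?c1 + t^2 * F2 t * t * ?c2) \<longlongrightarrow> iter_partial [i, j, k] \<Psi> 0) (at_right 0)"
    using partial_radial_on_axis(2)
    by (intro iter_partial_tendsto_along_axis[of _ i0])
       (simp add: radial3_def axis_nth_kron kron_sym algebra_simps power2_eq_square)
  moreover have "((\<lambda>t. t * F1 t * ?c1 + t^2 * F2 t * t * ?c2) \<longlongrightarrow> 0 * fdot0 * ?c1 + 0 * 0 * ?c2) (at_right 0)"
    by (intro tendsto_intros fdot_tendsto fddot_scaled_tendsto)
  ultimately show ?thesis
    using tendsto_unique[OF trivial_limit_at_right_real] by force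
qed

lemma fourth_partials_at_0:
  "partial i (partial j (partial k (partial l \<Psi>))) 0 = radial4 fdot0 0 0 0 i j k l"
proof -
  let ?c1 = "kron j k * kron i l + kron j l * kron i k + kron k l * kron i j"
  let ?c2 = "kron i j * kron i k * kron i l"
  have "((\<lambda>t. F1 t * ?c1 + t^2 * F2 t * ?c2) \<longlongrightarrow> partial i (iter_partial [j, k, l] \<Psi>) 0) (at_right 0)"
    using partial_radial_on_axis(2) third_partials_at_0
    by (intro partial_at_0_tendsto_along_axis)
       (fastforce simp: radial3_def axis_nth_kron kron_sym field_simps power2_eq_square dest: radii_pos)
  moreover have "((\<lambda>t. F1 t * ?c1 + t^2 * F2 t * ?c2) \<longlongrightarrow> fdot0 * ?c1 + 0 * ?c2) (at_right 0)"
    by (intro tendsto_intros fdot_tendsto fddot_scaled_tendsto)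
  ultimately show ?thesis
    using tendsto_unique[OF trivial_limit_at_right_real] by (fastforce simp: radial4_def algebra_simps)
qed

lemma anti_bisec_at_0: "anti_bisec \<Psi> 0 u v = - fdot0 * ((u \<bullet> u) * (v \<bullet> v) + 2 * (u \<bullet> v)^2)"
  unfolding anti_bisec_split fourth_partials_at_0 third_partials_at_0 radial4_quartic by simp

lemma coefAB_tendsto:
  assumes "(F \<longlongrightarrow> f0) (at_right 0)" "f0 > 0"
  shows "((\<lambda>t. coefA \<phi> t + coefB \<phi> t) \<longlongrightarrow> - fdot0) (at_right 0)"
proof -
  have "((\<lambda>t. (- F t * F1 t + 2 * (t * F1 t)^2 - F t * (t^2 * F2 t)) / (F t + t * (t * F1 t)))
          \<longlongrightarrow> (- f0 * fdot0 + 2 * (0 * fdot0)^2 - f0 * 0) / (f0 + 0 * (0 * fdot0))) (at_right 0)"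
    using assms by (intro tendsto_intros fdot_tendsto fddot_scaled_tendsto) auto
  moreover have "\<forall>\<^sub>F t in at_right 0. (- F t * F1 t + 2 * (t * F1 t)^2 - F t * (t^2 * F2 t)) / (F t + t * (t * F1 t))
                                    = coefA \<phi> t + coefB \<phi> t"
    using eventually_in_radii
  proof (rule eventually_mono)
    fix t
    assume t: "t \<in> radii"
    then have "F t + t * (t * F1 t) = H t" "H t > 0"
      using radh_eq radf_radh_pos_radii by (simp_all add: power2_eq_square)
    then show "(- F t * F1 t + 2 * (t * F1 t)^2 - F t * (t^2 * F2 t)) / (F t + t * (t * F1 t))
               = coefA \<phi> t + coefB \<phi> t"
      by (simp add: coefA_def coefB_def field_simps power2_eq_square)
  qed
  ultimately show ?thesis
    using assms(2) by (simp add: tendsto_cong)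
qed

lemma anti_bisec_nonneg_at_0:
  assumes f0: "(F \<longlongrightarrow> f0) (at_right 0)" "f0 > 0"
    and AB: "\<forall>r\<in>radii. coefA \<phi> r + coefB \<phi> r \<ge> 0"
    and orth: "(\<Sum>i\<in>UNIV. \<Sum>j\<in>UNIV. hess \<Psi> 0 $ i $ j * u $ i * v $ j) = 0"
  shows "anti_bisec \<Psi> 0 u v \<ge> 0"
proof -
  have "0 \<le> - fdot0"
    by (rule tendsto_lowerbound[OF coefAB_tendsto[OF f0]])
       (use eventually_in_radii AB in \<open>auto elim: eventually_mono\<close>)
  moreover have "u \<bullet> v = 0"
    using orth f0(2) by (simp add: hess_at_0[OF f0(1)] radial2_bilinear)
  ultimately show ?thesis
    by (simp add: anti_bisec_at_0 mult_nonpos_nonneg)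
qed

lemma NOAB_iff_coef_conditions:
  assumes "(F \<longlongrightarrow> f0) (at_right 0)" "f0 > 0"
  shows "NOAB \<Psi> (eball0 a) \<longleftrightarrow>
    (\<forall>r\<in>radii. coefA \<phi> r + coefB \<phi> r \<ge> 0 \<and> coefD \<phi> r \<ge> 0 \<and> (CARD('n) = 2 \<or> coefA \<phi> r \<ge> 0))"
proof
  assume "NOAB \<Psi> (eball0 a)"
  then show "\<forall>r\<in>radii. coefA \<phi> r + coefB \<phi> r \<ge> 0 \<and> coefD \<phi> r \<ge> 0 \<and> (CARD('n) = 2 \<or> coefA \<phi> r \<ge> 0)"
    using NOAB_imp_coefAB_nonneg NOAB_imp_coefD_nonneg NOAB_imp_coefA_nonneg by blast
next
  assume coef: "\<forall>r\<in>radii. coefA \<phi> r + coefB \<phi> r \<ge> 0 \<and> coefD \<phi> r \<ge> 0 \<and> (CARD('n) = 2 \<or> coefA \<phi> r \<ge> 0)"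
  show "NOAB \<Psi> (eball0 a)"
    unfolding NOAB_def
  proof (intro ballI allI impI)
    fix x u v
    assume x: "x \<in> eball0 a" and orth: "(\<Sum>i\<in>UNIV. \<Sum>j\<in>UNIV. hess \<Psi> x $ i $ j * u $ i * v $ j) = 0"
    show "anti_bisec \<Psi> x u v \<ge> 0"
    proof (cases "x = 0")
      case True
      then show ?thesis
        using anti_bisec_nonneg_at_0[OF assms] coef orth by blast
    next
      case False
      then have "x \<in> punctured_ball"
        using x by (simp add: punctured_ball_def)
      then show ?thesis
        using anti_bisec_nonneg_punctured[OF _ orth] norm_in_radii coef by blast
    qed
  qed
qed

end

theorem mainTheorem3:
  fixes \<Psi> :: "real^'n::finite \<Rightarrow> real" and \<phi> :: "real \<Rightarrow> real" and a :: ereal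
  assumes "CARD('n) \<ge> 2"
    and "0 < a"
    and "smooth_on (eball0 a) \<Psi>"
    and "convex_on (eball0 a) \<Psi>"
    and "\<forall>x\<in>eball0 a. \<Psi> x = \<phi> (norm x)"
    and "\<forall>r. 0 < r \<and> ereal r < a \<longrightarrow> radf \<phi> r > 0 \<and> radh \<phi> r > 0"
    and "\<exists>f0>0. (radf \<phi> \<longlongrightarrow> f0) (at_right 0)"
    and "\<exists>h0>0. (radh \<phi> \<longlongrightarrow> h0) (at_right 0)"
  shows "NOAB \<Psi> (eball0 a) \<longleftrightarrow>
    (if CARD('n) = 2
     then (\<forall>r. 0 < r \<and> ereal r < a \<longrightarrow> coefA \<phi> r + coefB \<phi> r \<ge> 0 \<and> coefD \<phi> r \<ge> 0)
     else (\<forall>r. 0 < r \<and> ereal r < a \<longrightarrow>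
             coefA \<phi> r \<ge> 0 \<and> coefA \<phi> r + coefB \<phi> r \<ge> 0 \<and> coefD \<phi> r \<ge> 0))"
proof -
  interpret radial_potential \<Psi> \<phi> a
    using assms(1-3,5,6) by unfold_locales
  obtain f0 where "(radf \<phi> \<longlongrightarrow> f0) (at_right 0)" "f0 > 0"
    using assms(7) by blast
  then show ?thesis
    unfolding NOAB_iff_coef_conditions[OF \<open>(radf \<phi> \<longlongrightarrow> f0) (at_right 0)\<close> \<open>f0 > 0\<close>]
    by (auto simp: radii_def)
qed

end
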